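(* Let $C_\alpha$ ($\alpha<\kappa$) be compact metric spaces, $C=\prod_{\alpha<\kappa}C_\alpha$, $X\subseteq C$ and $r\colon C\to X$ a continuous map with $r(x)=x$ for all $x\in X$. Then the union of any family of $r$-admissible subsets of $\kappa$ is $r$-admissible.
   Context: A set $S\subseteq\kappa$ is called $r$-admissible if for all $x,x'\in C$, $x\restriction S=x'\restriction S$ implies $r(x)\restriction S=r(x')\restriction S$. *)

theory Defs
  imports "HOL-Analysis.Analysis"
begin

definition r_admissible ::
  "('i \<Rightarrow> 'a) set \<Rightarrow> (('i \<Rightarrow> 'a) \<Rightarrow> ('i \<Rightarrow> 'a)) \<Rightarrow> 'i set \<Rightarrow> bool" where
  "r_admissible C r S \<longleftrightarrow>
     (\<forall>x\<in>C. \<forall>x'\<in>C. restrict x S = restrict x' S \<longrightarrow> restrict (r x) S = restrict (r x') S)"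

end

theory Submission
  imports Defs
begin

text \<open>Admissibility of a union is a pointwise statement: a coordinate of the union lies in some
  member of the family, and agreement on the union implies agreement on that member.\<close>

lemma restrict_eq_iff: "restrict f A = restrict g A \<longleftrightarrow> (\<forall>x\<in>A. f x = g x)"
  by (metis restrict_apply' restrict_ext)

lemma r_admissible_Union:
  assumes "\<And>S. S \<in> \<F> \<Longrightarrow> r_admissible C r S"
  shows "r_admissible C r (\<Union>\<F>)"
  unfolding r_admissible_def
proof (intro ballI impI)
  fix x x' assume "x \<in> C" "x' \<in> C" and agree: "restrict x (\<Union>\<F>) = restrict x' (\<Union>\<F>)"
  show "restrict (r x) (\<Union>\<F>) = restrict (r x') (\<Union>\<F>)"
    unfolding restrict_eq_iff
  proof
    fix i assume "i \<in> \<Union>\<F>"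
    then obtain S where "S \<in> \<F>" "i \<in> S" by blast
    from agree \<open>S \<in> \<F>\<close> have "restrict x S = restrict x' S"
      by (auto simp: restrict_eq_iff)
    with assms[OF \<open>S \<in> \<F>\<close>] \<open>x \<in> C\<close> \<open>x' \<in> C\<close> have "restrict (r x) S = restrict (r x') S"
      unfolding r_admissible_def by blast
    with \<open>i \<in> S\<close> show "r x i = r x' i"
      by (simp add: restrict_eq_iff)
  qed
qed

theorem lemma2p2:
  fixes \<kappa> :: "'i set"
    and m :: "'i \<Rightarrow> 'a metric"
    and X :: "('i \<Rightarrow> 'a) set"
    and r :: "('i \<Rightarrow> 'a) \<Rightarrow> ('i \<Rightarrow> 'a)"
    and \<F> :: "'i set set"
  assumes compact: "\<And>\<alpha>. \<alpha> \<in> \<kappa> \<Longrightarrow> compact_space (mtopology_of (m \<alpha>))"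
    and X_sub: "X \<subseteq> topspace (product_topology (\<lambda>\<alpha>. mtopology_of (m \<alpha>)) \<kappa>)"
    and r_cont: "continuous_map (product_topology (\<lambda>\<alpha>. mtopology_of (m \<alpha>)) \<kappa>)
                   (subtopology (product_topology (\<lambda>\<alpha>. mtopology_of (m \<alpha>)) \<kappa>) X) r"
    and r_retr: "\<And>x. x \<in> X \<Longrightarrow> r x = x"
    and F_sub: "\<And>S. S \<in> \<F> \<Longrightarrow> S \<subseteq> \<kappa>"
    and F_adm: "\<And>S. S \<in> \<F> \<Longrightarrow>
                  r_admissible (topspace (product_topology (\<lambda>\<alpha>. mtopology_of (m \<alpha>)) \<kappa>)) r S"
  shows "r_admissible (topspace (product_topology (\<lambda>\<alpha>. mtopology_of (m \<alpha>)) \<kappa>)) r (\<Union>\<F>)"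
  using F_adm by (rule r_admissible_Union)

end
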